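(* Let $(X,\mathcal{X},\mu)$ be a probability space, $(Y,\mathcal{Y})$ a measurable space, $f\colon X\to Y$ a measurable function, and $\mu_f=\mu\circ\mathit{pre}_f\colon\mathcal{Y}\to[0,1]$ the output probability measure. Let $\mathit{pre}^\sharp_f\colon\wp(Y)\to\wp(X)$ satisfy $\mathit{pre}_f(A)\subseteq\mathit{pre}^\sharp_f(A)$ for all $A\subseteq Y$, and let $\uparrow\colon\wp(X)\to\mathcal{X}$ be an abstraction. Define $\mu^\sharp_f=\mu\circ\uparrow\circ\,\mathit{pre}^\sharp_f$. Then $\mu_f(A)\le\mu^\sharp_f(A)$ for all $A\in\mathcal{Y}$, and if $\mathit{pre}^\sharp_f$ and $\uparrow$ are monotone then $\mu^\sharp_f$ is monotone.
   Context: For $f\colon X\to Y$, $\mathit{pre}_f(B)=\{x\in X\mid f(x)\in B\}$; $f$ is measurable if $\mathit{pre}_f(B)\in\mathcal{X}$ for all $B\in\mathcal{Y}$. An abstraction is a function $\uparrow\colon\wp(X)\to\mathcal{X}$ with $S\subseteq\,\uparrow(S)$ for all $S\subseteq X$. A set function $g$ is monotone if $A\subseteq B$ implies $g(A)\subseteq g(B)$ (resp. $g(A)\le g(B)$ for real-valued $g$). *)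

theory Defs
  imports "HOL-Probability.Probability"
begin

definition pre :: "'a measure \<Rightarrow> ('a \<Rightarrow> 'b) \<Rightarrow> 'b set \<Rightarrow> 'a set" where
  "pre M f B = {x \<in> space M. f x \<in> B}"

definition abstraction :: "'a measure \<Rightarrow> ('a set \<Rightarrow> 'a set) \<Rightarrow> bool" where
  "abstraction M up \<longleftrightarrow> (\<forall>S. S \<subseteq> space M \<longrightarrow> up S \<in> sets M \<and> S \<subseteq> up S)"

definition set_mono_on :: "'b set \<Rightarrow> ('b set \<Rightarrow> 'c set) \<Rightarrow> bool" where
  "set_mono_on Y g \<longleftrightarrow> (\<forall>A B. A \<subseteq> B \<and> B \<subseteq> Y \<longrightarrow> g A \<subseteq> g B)"

definition mu_sharp :: "'a measure \<Rightarrow> ('a set \<Rightarrow> 'a set) \<Rightarrow> ('b set \<Rightarrow> 'a set) \<Rightarrow> 'b set \<Rightarrow> real" where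
  "mu_sharp M up pre_s A = measure M (up (pre_s A))"

end

theory Submission
  imports Defs
begin

text \<open>Both claims reduce to monotonicity of the finite measure \<open>\<mu>\<close> on the measurable
  over-approximation \<open>\<up>(pre\<^sup>\<sharp>\<^sub>f A)\<close>.\<close>

lemma abstractionD:
  assumes "abstraction M up" and "S \<subseteq> space M"
  shows "up S \<in> sets M" and "S \<subseteq> up S"
  using assms unfolding abstraction_def by auto

lemma (in finite_measure) measure_le_mu_sharp:
  assumes "abstraction M up" and "pre_s A \<subseteq> space M" and "S \<subseteq> pre_s A"
  shows "measure M S \<le> mu_sharp M up pre_s A"
proof -
  have "S \<subseteq> up (pre_s A)"
    using abstractionD(2)[OF assms(1,2)] assms(3) by blast
  then show ?thesis
    unfolding mu_sharp_def using finite_measure_mono abstractionD(1)[OF assms(1,2)] by blast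
qed

lemma (in finite_measure) mu_sharp_mono:
  assumes "abstraction M up" and "set_mono_on (space M) up"
    and "pre_s A \<subseteq> pre_s B" and "pre_s B \<subseteq> space M"
  shows "mu_sharp M up pre_s A \<le> mu_sharp M up pre_s B"
proof -
  have "up (pre_s A) \<subseteq> up (pre_s B)"
    using assms(2-4) unfolding set_mono_on_def by blast
  then show ?thesis
    unfolding mu_sharp_def using finite_measure_mono abstractionD(1)[OF assms(1,4)] by blast
qed

theorem theorem1:
  fixes M :: "'a measure" and N :: "'b measure" and f :: "'a \<Rightarrow> 'b"
    and pre_s :: "'b set \<Rightarrow> 'a set" and up :: "'a set \<Rightarrow> 'a set"
  assumes "prob_space M"
    and "f \<in> measurable M N"
    and "\<forall>A. A \<subseteq> space N \<longrightarrow> pre_s A \<subseteq> space M"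
    and "\<forall>A. A \<subseteq> space N \<longrightarrow> pre M f A \<subseteq> pre_s A"
    and "abstraction M up"
  shows "(\<forall>A \<in> sets N. measure M (pre M f A) \<le> mu_sharp M up pre_s A)
    \<and> (set_mono_on (space N) pre_s \<and> set_mono_on (space M) up \<longrightarrow>
        (\<forall>A B. A \<subseteq> B \<and> B \<subseteq> space N \<longrightarrow> mu_sharp M up pre_s A \<le> mu_sharp M up pre_s B))"
proof -
  interpret prob_space M by fact
  have "measure M (pre M f A) \<le> mu_sharp M up pre_s A" if "A \<in> sets N" for A
  proof -
    have "A \<subseteq> space N"
      using sets.sets_into_space[OF that] .
    then show ?thesis
      using assms(3,4) by (intro measure_le_mu_sharp[OF assms(5)]) auto
  qed
  moreover have "mu_sharp M up pre_s A \<le> mu_sharp M up pre_s B"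
    if "set_mono_on (space N) pre_s" "set_mono_on (space M) up" "A \<subseteq> B" "B \<subseteq> space N" for A B
  proof -
    have "pre_s A \<subseteq> pre_s B"
      using that(1,3,4) unfolding set_mono_on_def by simp
    then show ?thesis
      using assms(3) that(4) by (intro mu_sharp_mono[OF assms(5) that(2)]) auto
  qed
  ultimately show ?thesis by blast
qed

end
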